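(* Let $E$ be a finite set and $w\geq 1$ an integer. The map $\mathcal{D}:[0,\infty]^E\to[0,|E|]$ defined by $$\mathcal{D}(\mathbf{Y})=\sum_{e\in E}\frac{Y_e\mathcal{R}_e(\mathbf{Y})}{1+Y_e\mathcal{R}_e(\mathbf{Y})}\mathbf{1}(Y_e<\infty)+\min\Big(w,\sum_{e\in E}\mathbf{1}(Y_e=\infty)\Big)$$ is continuous (and coincides with $\sum_{e}\frac{Y_e\mathcal{R}_e(\mathbf{Y})}{1+Y_e\mathcal{R}_e(\mathbf{Y})}$ on $[0,\infty)^E$).
   Context: For $S\subseteq E$, $\mathbf{Y}^S=\prod_{f\in S}Y_f$, $\mathbf{Y}^\emptyset=1$. For $e\in E$, $\mathcal{R}_e$ is the map $[0,\infty]^{E\setminus\{e\}}\to[0,1]$ (applied to the coordinates of $\mathbf{Y}$ other than $e$) given on finite vectors by $\mathcal{R}_e(\mathbf{Y})=\frac{\sum_{S\subseteq E\setminus\{e\},|S|\leq w-1}\mathbf{Y}^S}{\sum_{S\subseteq E\setminus\{e\},|S|\leq w}\mathbf{Y}^S}$ and in general as follows: with $E'_e(\mathbf{Y})=\{f\neq e:Y_f=\infty\}$, if $|E'_e(\mathbf{Y})|<w$ then $\mathcal{R}_e(\mathbf{Y})=\frac{\sum_{S\subseteq E\setminus(E'_e\cup\{e\}),|S|\leq w-|E'_e|-1}\mathbf{Y}^S}{\sum_{S\subseteq E\setminus(E'_e\cup\{e\}),|S|\leq w-|E'_e|}\mathbf{Y}^S}$, and if $|E'_e(\mathbf{Y})|\geq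 w$ then $\mathcal{R}_e(\mathbf{Y})=0$. *)

theory Defs
  imports "HOL-Analysis.Analysis"
begin

text \<open>Vectors \<open>Y \<in> [0,\<infinity>]^E\<close> are functions \<open>Y :: 'a \<Rightarrow> ennreal\<close> restricted to the
  (extensional) domain \<open>E \<rightarrow>\<^sub>E UNIV\<close>; the topology is the product topology
  (Function_Topology).\<close>

definition Yprod :: "('a \<Rightarrow> ennreal) \<Rightarrow> 'a set \<Rightarrow> real" where
  "Yprod Y S = (\<Prod>f\<in>S. enn2real (Y f))"

definition Rfin :: "'a set \<Rightarrow> nat \<Rightarrow> 'a \<Rightarrow> ('a \<Rightarrow> ennreal) \<Rightarrow> real" where
  "Rfin E w e Y =
     (\<Sum>S\<in>{S. S \<subseteq> E - {e} \<and> card S \<le> w - 1}. Yprod Y S) /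
     (\<Sum>S\<in>{S. S \<subseteq> E - {e} \<and> card S \<le> w}. Yprod Y S)"

definition Einf :: "'a set \<Rightarrow> 'a \<Rightarrow> ('a \<Rightarrow> ennreal) \<Rightarrow> 'a set" where
  "Einf E e Y = {f \<in> E - {e}. Y f = \<infinity>}"

definition Rmap :: "'a set \<Rightarrow> nat \<Rightarrow> 'a \<Rightarrow> ('a \<Rightarrow> ennreal) \<Rightarrow> real" where
  "Rmap E w e Y =
     (if card (Einf E e Y) < w then
        (\<Sum>S\<in>{S. S \<subseteq> E - (Einf E e Y \<union> {e}) \<and> card S \<le> w - card (Einf E e Y) - 1}. Yprod Y S) /
        (\<Sum>S\<in>{S. S \<subseteq> E - (Einf E e Y \<union> {e}) \<and> card S \<le> w - card (Einf E e Y)}. Yprod Y S)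
      else 0)"

definition Dmap :: "'a set \<Rightarrow> nat \<Rightarrow> ('a \<Rightarrow> ennreal) \<Rightarrow> real" where
  "Dmap E w Y =
     (\<Sum>e\<in>E. if Y e < \<infinity>
              then enn2real (Y e) * Rmap E w e Y / (1 + enn2real (Y e) * Rmap E w e Y)
              else 0)
     + real (min w (card {e\<in>E. Y e = \<infinity>}))"

end

theory Submission
  imports Defs
begin

text \<open>
  Substitute \<open>s f = 1/(1 + Y f)\<close>, a continuous map \<open>[0,\<infinity>] \<rightarrow> [0,1]\<close> with
  \<open>s f = 0\<close> exactly when \<open>Y f = \<infinity>\<close>. Give each \<open>S \<subseteq> E\<close> the Bernoulli weight
  \<open>W S = (\<Prod>f\<in>S. 1 - s f) * (\<Prod>f\<in>E - S. s f)\<close>, and let \<open>Z\<close> and \<open>N\<close> be the sums of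
  \<open>W S\<close> and of \<open>|S| * W S\<close> over all \<open>S\<close> with \<open>|S| \<le> w\<close>. Both are polynomials in \<open>s\<close>,
  hence continuous in \<open>Y\<close>.

  If at most \<open>w\<close> coordinates of \<open>Y\<close> are infinite, then \<open>Z > 0\<close> and \<open>\<D>(Y) = N/Z\<close>, the
  mean size of a Bernoulli subset conditioned to have at most \<open>w\<close> elements: only subsets
  containing all infinite coordinates have nonzero weight, on them \<open>W\<close> is \<open>Y\<^sup>T\<close> (for the
  finite part \<open>T\<close>) up to a common positive factor, and the summand of \<open>\<D>\<close> belonging to
  \<open>e\<close> is the conditioned probability that \<open>e \<in> T\<close>. Near such a point the same holds, so
  \<open>\<D>\<close> is continuous there. If more than \<open>w\<close> coordinates are infinite, \<open>\<D>(Y) = w\<close>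
  by definition; near such a point \<open>\<D> \<le> w\<close>, and a truncation estimate shows that \<open>N/Z\<close>
  differs from \<open>w\<close> by at most a constant times the sum of \<open>s f\<close> over the infinite
  coordinates of the limit point, which tends to \<open>0\<close>.
\<close>

section \<open>Bernoulli weights truncated at size \<open>w\<close>\<close>

definition small_subsets :: "'a set \<Rightarrow> nat \<Rightarrow> 'a set set" where
  "small_subsets E w = {S. S \<subseteq> E \<and> card S \<le> w}"

text \<open>Weight of \<open>S \<subseteq> E\<close> when each \<open>f \<in> E\<close> is left out independently with probability \<open>s f\<close>.\<close>
definition bweight :: "'a set \<Rightarrow> ('a \<Rightarrow> real) \<Rightarrow> 'a set \<Rightarrow> real" where
  "bweight E s S = (\<Prod>f\<in>S. 1 - s f) * (\<Prod>f\<in>E - S. s f)"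

definition Zw :: "'a set \<Rightarrow> nat \<Rightarrow> ('a \<Rightarrow> real) \<Rightarrow> real" where
  "Zw E w s = (\<Sum>S\<in>small_subsets E w. bweight E s S)"

definition Nw :: "'a set \<Rightarrow> nat \<Rightarrow> ('a \<Rightarrow> real) \<Rightarrow> real" where
  "Nw E w s = (\<Sum>S\<in>small_subsets E w. real (card S) * bweight E s S)"

lemma finite_small_subsets: "finite E \<Longrightarrow> finite (small_subsets E w)"
  unfolding small_subsets_def by (rule finite_subset[of _ "Pow E"]) auto

lemma small_subsets_finite_member: "finite E \<Longrightarrow> S \<in> small_subsets E w \<Longrightarrow> finite S"
  unfolding small_subsets_def by (auto intro: finite_subset)

lemma bweight_nonneg: "(\<And>f. 0 \<le> s f \<and> s f \<le> 1) \<Longrightarrow> bweight E s S \<ge> 0"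
  unfolding bweight_def by (intro mult_nonneg_nonneg prod_nonneg) auto

lemma mean_size_bounds:
  assumes fin: "finite E" and s: "\<And>f. 0 \<le> s f \<and> s f \<le> 1" and Z: "Zw E w s > 0"
  shows "0 \<le> Nw E w s / Zw E w s \<and> Nw E w s / Zw E w s \<le> real (card E)
    \<and> Nw E w s / Zw E w s \<le> real w"
proof -
  have size_bound: "Nw E w s \<le> real b * Zw E w s" if "\<And>S. S \<in> small_subsets E w \<Longrightarrow> card S \<le> b"
    for b
  proof -
    have "Nw E w s \<le> (\<Sum>S\<in>small_subsets E w. real b * bweight E s S)"
      unfolding Nw_def using that by (intro sum_mono mult_right_mono bweight_nonneg s) auto
    then show ?thesis by (simp add: Zw_def sum_distrib_left)
  qed
  have "Nw E w s \<ge> 0"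
    unfolding Nw_def by (intro sum_nonneg mult_nonneg_nonneg bweight_nonneg s) auto
  moreover have "Nw E w s \<le> real (card E) * Zw E w s"
    using fin by (intro size_bound) (auto simp: small_subsets_def intro: card_mono)
  moreover have "Nw E w s \<le> real w * Zw E w s"
    by (intro size_bound) (auto simp: small_subsets_def)
  ultimately show ?thesis using Z by (simp add: divide_le_eq)
qed

text \<open>A subset of size \<open>< w\<close> misses some \<open>f \<in> U\<close> when \<open>|U| > w\<close>; adding \<open>f\<close> shows its
  weight is at most \<open>2 s f\<close> times the total weight.\<close>
lemma bweight_small_subset:
  assumes fin: "finite E" and s: "\<And>f. 0 \<le> s f \<and> s f \<le> 1"
    and U: "U \<subseteq> E" "card U > w" and S: "S \<in> small_subsets E w" "card S < w"
  shows "bweight E s S \<le> 2 * (\<Sum>f\<in>U. s f) * Zw E w s"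
proof -
  have finS: "finite S" by (rule small_subsets_finite_member[OF fin S(1)])
  have below_Z: "bweight E s T \<le> Zw E w s" if "T \<in> small_subsets E w" for T
    unfolding Zw_def
    by (rule member_le_sum) (use that finite_small_subsets[OF fin] bweight_nonneg[of s, OF s] in auto)
  have "\<not> U \<subseteq> S"
  proof
    assume "U \<subseteq> S"
    then have "card U \<le> card S" by (rule card_mono[OF finS])
    then show False using S U by simp
  qed
  then obtain f where f: "f \<in> U" "f \<notin> S" by auto
  have fE: "f \<in> E" using f U by auto
  have E_S: "E - S = insert f (E - insert f S)" using fE f by auto
  have out_f: "(\<Prod>g\<in>E - S. s g) = s f * (\<Prod>g\<in>E - insert f S. s g)"
    unfolding E_S using fin by (subst prod.insert) auto
  have in_f: "(\<Prod>g\<in>insert f S. 1 - s g) = (1 - s f) * (\<Prod>g\<in>S. 1 - s g)"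
    using finS f by simp
  have exchange: "(1 - s f) * bweight E s S = s f * bweight E s (insert f S)"
    unfolding bweight_def out_f in_f by (simp add: algebra_simps)
  have ins: "insert f S \<in> small_subsets E w"
    using S fE f finS by (auto simp: small_subsets_def)
  have sf_le: "s f \<le> (\<Sum>f\<in>U. s f)"
    by (rule member_le_sum) (use f U fin s in \<open>auto intro: finite_subset\<close>)
  have "bweight E s S = (1 - s f) * bweight E s S + s f * bweight E s S"
    by (simp add: algebra_simps)
  also have "\<dots> \<le> s f * Zw E w s + s f * Zw E w s"
    unfolding exchange using below_Z[OF ins] below_Z[OF S(1)] s
    by (intro add_mono mult_left_mono) auto
  also have "\<dots> \<le> 2 * (\<Sum>f\<in>U. s f) * Zw E w s"
    using mult_right_mono[OF sf_le order_trans[OF bweight_nonneg[of s, OF s] below_Z[OF S(1)]]]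
    by simp
  finally show ?thesis .
qed

lemma mean_size_near_max:
  assumes fin: "finite E" and s: "\<And>f. 0 \<le> s f \<and> s f \<le> 1" and Z: "Zw E w s > 0"
    and U: "U \<subseteq> E" "card U > w"
  shows "real w - Nw E w s / Zw E w s
    \<le> 2 * real w * real (card (small_subsets E w)) * (\<Sum>f\<in>U. s f)"
proof -
  define \<delta> where "\<delta> = (\<Sum>f\<in>U. s f)"
  have "\<delta> \<ge> 0" unfolding \<delta>_def using s by (simp add: sum_nonneg)
  have "real w * Zw E w s - Nw E w s
      = (\<Sum>S\<in>small_subsets E w. (real w - real (card S)) * bweight E s S)"
    by (simp add: Zw_def Nw_def sum_distrib_left sum_subtractf algebra_simps)
  also have "\<dots> \<le> real (card (small_subsets E w)) * (real w * (2 * \<delta> * Zw E w s))"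
  proof (rule sum_bounded_above)
    fix S assume S: "S \<in> small_subsets E w"
    show "(real w - real (card S)) * bweight E s S \<le> real w * (2 * \<delta> * Zw E w s)"
    proof (cases "card S < w")
      case True
      have "(real w - real (card S)) * bweight E s S \<le> real w * bweight E s S"
        using bweight_nonneg[of s, OF s] by (simp add: mult_right_mono)
      also have "\<dots> \<le> real w * (2 * \<delta> * Zw E w s)"
        using bweight_small_subset[OF fin s U S True] by (simp add: \<delta>_def mult_left_mono)
      finally show ?thesis .
    next
      case False
      then have "card S = w" using S by (simp add: small_subsets_def)
      then show ?thesis using \<open>\<delta> \<ge> 0\<close> Z by simp
    qed
  qed
  finally have "(real w * Zw E w s - Nw E w s) / Zw E w s
      \<le> 2 * real w * real (card (small_subsets E w)) * \<delta>"
    using Z by (simp add: divide_le_eq algebra_simps)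
  then show ?thesis using Z by (simp add: \<delta>_def diff_divide_distrib)
qed

section \<open>The substitution \<open>s = 1/(1 + Y)\<close>\<close>

definition inv1p :: "ennreal \<Rightarrow> real" where
  "inv1p x = enn2real (inverse (1 + x))"

lemma inv1p_finite: "x \<noteq> \<infinity> \<Longrightarrow> inv1p x = 1 / (1 + enn2real x)"
  by (smt (verit, best) divide_less_0_1_iff enn2real_ennreal enn2real_nonneg ennreal_1
      ennreal_enn2real_if ennreal_plus infinity_ennreal_def inverse_ennreal inverse_eq_divide
      inv1p_def)

lemma inv1p_infinity [simp]: "inv1p \<infinity> = 0" and inv1p_top [simp]: "inv1p top = 0"
  by (simp_all add: inv1p_def)

lemma inv1p_pos: "x \<noteq> \<infinity> \<Longrightarrow> inv1p x > 0"
  by (simp add: inv1p_finite add_pos_nonneg)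

lemma inv1p_range: "0 \<le> inv1p x \<and> inv1p x \<le> 1"
proof -
  have "inv1p x \<le> 1"
    by (cases "x = \<infinity>") (simp_all add: inv1p_finite divide_le_eq_1 add_pos_nonneg)
  then show ?thesis by (simp add: inv1p_def)
qed

text \<open>The complementary probability \<open>1 - s\<close> equals \<open>Y * s\<close>; this turns Bernoulli weights
  into the monomials \<open>Y\<^sup>S\<close>.\<close>
lemma inv1p_complement: "x \<noteq> \<infinity> \<Longrightarrow> 1 - inv1p x = enn2real x * inv1p x"
  using add_pos_nonneg[of 1 "enn2real x"] by (simp add: inv1p_finite field_simps)

lemma continuous_inv1p: "continuous_on UNIV inv1p"
  unfolding continuous_on_def
proof
  fix x :: ennreal
  have "continuous_on UNIV (\<lambda>x::ennreal. inverse (1 + x))"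
    by (intro continuous_on_inverse_ennreal continuous_on_add_ennreal continuous_on_const
        continuous_on_id)
  then have "((\<lambda>x::ennreal. inverse (1 + x)) \<longlongrightarrow> inverse (1 + x)) (at x within UNIV)"
    unfolding continuous_on_def by auto
  moreover have "inverse (1 + x) = ennreal (enn2real (inverse (1 + x)))"
    by (simp add: ennreal_enn2real_if)
  ultimately have "((\<lambda>x::ennreal. inverse (1 + x))
      \<longlongrightarrow> ennreal (enn2real (inverse (1 + x)))) (at x within UNIV)"
    by simp
  from tendsto_enn2real[OF this] show "(inv1p \<longlongrightarrow> inv1p x) (at x within UNIV)"
    unfolding inv1p_def by simp
qed

section \<open>Sums of the monomials \<open>Y\<^sup>S\<close>\<close>

lemma Yprod_nonneg: "Yprod Y S \<ge> 0"
  unfolding Yprod_def by (auto intro!: prod_nonneg)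

lemma Yprod_insert: "finite S \<Longrightarrow> e \<notin> S \<Longrightarrow> Yprod Y (insert e S) = enn2real (Y e) * Yprod Y S"
  by (simp add: Yprod_def)

text \<open>The empty set contributes \<open>Y\<^sup>\<emptyset> = 1\<close>, so these sums are never zero.\<close>
lemma sum_Yprod_ge_1:
  assumes "finite F" shows "1 \<le> (\<Sum>T\<in>small_subsets F k. Yprod Y T)"
proof -
  have "Yprod Y {} \<le> (\<Sum>T\<in>small_subsets F k. Yprod Y T)"
    by (rule member_le_sum)
      (use assms in \<open>auto simp: finite_small_subsets Yprod_nonneg small_subsets_def\<close>)
  then show ?thesis by (simp add: Yprod_def)
qed

lemma sum_Yprod_containing:
  assumes F: "finite F" "e \<in> F" and k: "k \<ge> 1"
  shows "(\<Sum>T\<in>small_subsets F k. if e \<in> T then Yprod Y T else 0)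
    = enn2real (Y e) * (\<Sum>S\<in>small_subsets (F - {e}) (k - 1). Yprod Y S)"
proof -
  have "(\<Sum>T\<in>small_subsets F k. if e \<in> T then Yprod Y T else 0)
      = (\<Sum>T\<in>{T\<in>small_subsets F k. e \<in> T}. Yprod Y T)"
    by (simp add: sum.inter_filter finite_small_subsets F)
  also have "\<dots> = (\<Sum>S\<in>small_subsets (F - {e}) (k - 1). Yprod Y (insert e S))"
  proof (rule sum.reindex_bij_witness[where j = "\<lambda>T. T - {e}" and i = "insert e"])
    fix T assume T: "T \<in> {T\<in>small_subsets F k. e \<in> T}"
    then have "finite T" using F by (auto simp: small_subsets_def intro: finite_subset)
    with T show "insert e (T - {e}) = T" "T - {e} \<in> small_subsets (F - {e}) (k - 1)"
      "Yprod Y (insert e (T - {e})) = Yprod Y T"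
      by (auto simp: small_subsets_def insert_absorb)
  next
    fix S assume S: "S \<in> small_subsets (F - {e}) (k - 1)"
    then have "finite S" using F by (auto simp: small_subsets_def intro: finite_subset)
    with S F k show "insert e S - {e} = S" "insert e S \<in> {T\<in>small_subsets F k. e \<in> T}"
      by (auto simp: small_subsets_def card_insert_if)
  qed
  also have "\<dots> = (\<Sum>S\<in>small_subsets (F - {e}) (k - 1). enn2real (Y e) * Yprod Y S)"
    using F by (intro sum.cong refl Yprod_insert) (auto simp: small_subsets_def intro: finite_subset)
  finally show ?thesis by (simp only: sum_distrib_left)
qed

lemma sum_Yprod_avoiding:
  assumes "finite F"
  shows "(\<Sum>T\<in>small_subsets F k. if e \<notin> T then Yprod Y T else 0)
    = (\<Sum>S\<in>small_subsets (F - {e}) k. Yprod Y S)"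
proof -
  have "(\<Sum>T\<in>small_subsets F k. if e \<notin> T then Yprod Y T else 0)
      = (\<Sum>T\<in>{T\<in>small_subsets F k. e \<notin> T}. Yprod Y T)"
    by (simp add: sum.inter_filter finite_small_subsets assms)
  also have "{T\<in>small_subsets F k. e \<notin> T} = small_subsets (F - {e}) k"
    by (auto simp: small_subsets_def)
  finally show ?thesis .
qed

text \<open>The recursion \<open>\<Sum>\<^bsub>|T| \<le> k\<^esub> Y\<^sup>T = \<Sum>\<^bsub>|S| \<le> k, e \<notin> S\<^esub> Y\<^sup>S + Y e * \<Sum>\<^bsub>|S| \<le> k-1, e \<notin> S\<^esub> Y\<^sup>S\<close>
  relating the denominators of \<open>\<R>\<^sub>e\<close> and of the summand of \<open>\<D>\<close>.\<close>
lemma sum_Yprod_split: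
  assumes "finite F" "e \<in> F" "k \<ge> 1"
  shows "(\<Sum>T\<in>small_subsets F k. Yprod Y T)
    = (\<Sum>S\<in>small_subsets (F - {e}) k. Yprod Y S)
      + enn2real (Y e) * (\<Sum>S\<in>small_subsets (F - {e}) (k - 1). Yprod Y S)"
proof -
  have "(\<Sum>T\<in>small_subsets F k. Yprod Y T)
      = (\<Sum>T\<in>small_subsets F k. if e \<notin> T then Yprod Y T else 0)
        + (\<Sum>T\<in>small_subsets F k. if e \<in> T then Yprod Y T else 0)"
    unfolding sum.distrib[symmetric] by (rule sum.cong) auto
  then show ?thesis by (simp only: sum_Yprod_avoiding sum_Yprod_containing assms)
qed

section \<open>The map \<open>\<D>\<close> as a conditioned mean size\<close>

definition infset :: "'a set \<Rightarrow> ('a \<Rightarrow> ennreal) \<Rightarrow> 'a set" where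
  "infset E Y = {f\<in>E. Y f = \<infinity>}"

definition Dterm :: "'a set \<Rightarrow> nat \<Rightarrow> ('a \<Rightarrow> ennreal) \<Rightarrow> 'a \<Rightarrow> real" where
  "Dterm E w Y e = (if Y e < \<infinity>
     then enn2real (Y e) * Rmap E w e Y / (1 + enn2real (Y e) * Rmap E w e Y) else 0)"

lemma Dmap_altdef: "Dmap E w Y = (\<Sum>e\<in>E. Dterm E w Y e) + real (min w (card (infset E Y)))"
  by (simp add: Dmap_def Dterm_def infset_def)

lemma Einf_finite_coord: "Y e < \<infinity> \<Longrightarrow> Einf E e Y = infset E Y"
  by (auto simp: Einf_def infset_def)

text \<open>With more than \<open>w\<close> infinite coordinates every \<open>\<R>\<^sub>e\<close> vanishes and \<open>\<D> = w\<close>.\<close>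
lemma Dmap_saturated:
  assumes "card (infset E Y) > w"
  shows "Dmap E w Y = real w"
proof -
  have "Dterm E w Y e = 0" for e
    using assms by (simp add: Dterm_def Rmap_def Einf_finite_coord)
  then show ?thesis using assms by (simp add: Dmap_altdef)
qed

lemma Dterm_eq:
  fixes Y :: "'a \<Rightarrow> ennreal"
  assumes fin: "finite E" and unsat: "card (infset E Y) \<le> w" and e: "e \<in> E" "Y e < \<infinity>"
  defines "F \<equiv> E - infset E Y" and "k \<equiv> w - card (infset E Y)"
  shows "Dterm E w Y e = (\<Sum>T\<in>small_subsets F k. if e \<in> T then Yprod Y T else 0)
    / (\<Sum>T\<in>small_subsets F k. Yprod Y T)"
proof -
  define y where "y = enn2real (Y e)"
  have finF: "finite F" using fin by (simp add: F_def)
  have eF: "e \<in> F" using e by (auto simp: F_def infset_def)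
  show ?thesis
  proof (cases "card (infset E Y) < w")
    case True
    then have k1: "k \<ge> 1" by (simp add: k_def)
    define A where "A = (\<Sum>S\<in>small_subsets (F - {e}) (k - 1). Yprod Y S)"
    define B where "B = (\<Sum>S\<in>small_subsets (F - {e}) k. Yprod Y S)"
    have "E - (infset E Y \<union> {e}) = F - {e}" by (auto simp: F_def)
    then have R: "Rmap E w e Y = A / B"
      using True e by (simp add: Rmap_def Einf_finite_coord A_def B_def k_def small_subsets_def
          diff_commute)
    have containing: "(\<Sum>T\<in>small_subsets F k. if e \<in> T then Yprod Y T else 0) = y * A"
      unfolding A_def y_def by (rule sum_Yprod_containing[OF finF eF k1])
    have total: "(\<Sum>T\<in>small_subsets F k. Yprod Y T) = B + y * A"
      unfolding A_def B_def y_def by (rule sum_Yprod_split[OF finF eF k1])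
    have B1: "B \<ge> 1" unfolding B_def by (rule sum_Yprod_ge_1) (use finF in simp)
    have "y * A \<ge> 0" unfolding y_def A_def by (simp add: sum_nonneg Yprod_nonneg)
    then have "y * (A / B) / (1 + y * (A / B)) = y * A / (B + y * A)"
      using B1 by (simp add: field_simps)
    then show ?thesis using e by (simp add: Dterm_def R containing total y_def)
  next
    case False
    then have "k = 0" "card (infset E Y) = w" using unsat by (simp_all add: k_def)
    then have "Rmap E w e Y = 0" using e by (simp add: Rmap_def Einf_finite_coord)
    moreover have "(\<Sum>T\<in>small_subsets F k. if e \<in> T then Yprod Y T else 0) = 0"
    proof (rule sum.neutral, rule ballI)
      fix T assume "T \<in> small_subsets F k"
      then have "T = {}"
        using \<open>k = 0\<close> card_0_eq[OF finite_subset[OF _ finF]] by (auto simp: small_subsets_def)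
      then show "(if e \<in> T then Yprod Y T else 0) = 0" by simp
    qed
    ultimately show ?thesis by (simp add: Dterm_def)
  qed
qed


text \<open>Summing over \<open>e\<close> counts each subset \<open>T\<close> with multiplicity \<open>|T|\<close>.\<close>
lemma sum_Dterm:
  fixes Y :: "'a \<Rightarrow> ennreal"
  assumes fin: "finite E" and unsat: "card (infset E Y) \<le> w"
  defines "F \<equiv> E - infset E Y" and "k \<equiv> w - card (infset E Y)"
  shows "(\<Sum>e\<in>E. Dterm E w Y e) = (\<Sum>T\<in>small_subsets F k. real (card T) * Yprod Y T)
    / (\<Sum>T\<in>small_subsets F k. Yprod Y T)"
proof -
  have finF: "finite F" using fin by (simp add: F_def)
  have "(\<Sum>e\<in>E. Dterm E w Y e) = (\<Sum>e\<in>F. Dterm E w Y e)"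
    by (rule sum.mono_neutral_right) (use fin in \<open>auto simp: F_def infset_def Dterm_def\<close>)
  also have "\<dots> = (\<Sum>e\<in>F. (\<Sum>T\<in>small_subsets F k. if e \<in> T then Yprod Y T else 0)
      / (\<Sum>T\<in>small_subsets F k. Yprod Y T))"
    unfolding F_def k_def
    by (intro sum.cong refl Dterm_eq[OF fin unsat]) (auto simp: infset_def top.not_eq_extremum)
  also have "\<dots> = (\<Sum>e\<in>F. \<Sum>T\<in>small_subsets F k. if e \<in> T then Yprod Y T else 0)
      / (\<Sum>T\<in>small_subsets F k. Yprod Y T)"
    by (rule sum_divide_distrib[symmetric])
  also have "(\<Sum>e\<in>F. \<Sum>T\<in>small_subsets F k. if e \<in> T then Yprod Y T else 0)
      = (\<Sum>T\<in>small_subsets F k. \<Sum>e\<in>F. if e \<in> T then Yprod Y T else 0)"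
    by (rule sum.swap)
  also have "\<dots> = (\<Sum>T\<in>small_subsets F k. real (card T) * Yprod Y T)"
  proof (rule sum.cong)
    fix T assume "T \<in> small_subsets F k"
    then have "{e\<in>F. e \<in> T} = T" by (auto simp: small_subsets_def)
    then show "(\<Sum>e\<in>F. if e \<in> T then Yprod Y T else 0) = real (card T) * Yprod Y T"
      using sum.inter_filter[OF finF, of "\<lambda>_. Yprod Y T" "\<lambda>e. e \<in> T"] by simp
  qed simp
  finally show ?thesis .
qed

lemma bweight_inv1p_vanish:
  assumes "finite E" "S \<subseteq> E" "\<not> infset E Y \<subseteq> S"
  shows "bweight E (\<lambda>f. inv1p (Y f)) S = 0"
proof -
  obtain f where "f \<in> E - S" "Y f = \<infinity>" using assms(2,3) by (auto simp: infset_def)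
  then have "(\<Prod>f\<in>E - S. inv1p (Y f)) = 0" using assms(1) by (auto intro!: bexI[of _ f])
  then show ?thesis by (simp add: bweight_def)
qed

lemma bweight_inv1p_reduce:
  assumes fin: "finite E" and T: "T \<subseteq> E - infset E Y"
  shows "bweight E (\<lambda>f. inv1p (Y f)) (infset E Y \<union> T)
    = (\<Prod>f\<in>E - infset E Y. inv1p (Y f)) * Yprod Y T"
proof -
  define s where "s = (\<lambda>f. inv1p (Y f))"
  have finT: "finite T" and finI: "finite (infset E Y)"
    using T fin by (auto simp: infset_def intro: finite_subset)
  have "(\<Prod>f\<in>infset E Y \<union> T. 1 - s f) = (\<Prod>f\<in>infset E Y. 1 - s f) * (\<Prod>f\<in>T. 1 - s f)"
    by (rule prod.union_disjoint) (use finI finT T in auto)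
  also have "(\<Prod>f\<in>infset E Y. 1 - s f) = 1" by (simp add: infset_def s_def)
  also have "(\<Prod>f\<in>T. 1 - s f) = (\<Prod>f\<in>T. enn2real (Y f) * s f)"
  proof (rule prod.cong)
    fix f assume "f \<in> T"
    then have "Y f \<noteq> \<infinity>" using T by (auto simp: infset_def)
    then show "1 - s f = enn2real (Y f) * s f" by (simp add: s_def inv1p_complement)
  qed simp
  finally have inside: "(\<Prod>f\<in>infset E Y \<union> T. 1 - s f) = Yprod Y T * (\<Prod>f\<in>T. s f)"
    by (simp add: prod.distrib Yprod_def)
  have outside: "E - (infset E Y \<union> T) = (E - infset E Y) - T" by auto
  have "(\<Prod>f\<in>E - infset E Y. s f) = (\<Prod>f\<in>(E - infset E Y) - T. s f) * (\<Prod>f\<in>T. s f)"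
    by (rule prod.subset_diff) (use T fin in auto)
  then show ?thesis unfolding bweight_def inside outside s_def[symmetric] by simp
qed

lemma sum_bweight_inv1p:
  fixes Y :: "'a \<Rightarrow> ennreal" and g :: "'a set \<Rightarrow> real"
  assumes fin: "finite E" and unsat: "card (infset E Y) \<le> w"
  defines "F \<equiv> E - infset E Y" and "k \<equiv> w - card (infset E Y)"
  shows "(\<Sum>S\<in>small_subsets E w. g S * bweight E (\<lambda>f. inv1p (Y f)) S)
    = (\<Prod>f\<in>F. inv1p (Y f)) * (\<Sum>T\<in>small_subsets F k. g (infset E Y \<union> T) * Yprod Y T)"
proof -
  define I where "I = infset E Y"
  define s where "s = (\<lambda>f. inv1p (Y f))"
  have finI: "finite I" using fin by (simp add: I_def infset_def)
  have "(\<Sum>S\<in>small_subsets E w. g S * bweight E s S)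
      = (\<Sum>S\<in>{S\<in>small_subsets E w. I \<subseteq> S}. g S * bweight E s S)"
    by (rule sum.mono_neutral_right)
      (use finite_small_subsets[OF fin] bweight_inv1p_vanish[OF fin] in
        \<open>auto simp: small_subsets_def I_def s_def\<close>)
  also have "\<dots> = (\<Sum>T\<in>small_subsets F k. g (I \<union> T) * bweight E s (I \<union> T))"
  proof (rule sum.reindex_bij_witness[where j = "\<lambda>S. S - I" and i = "\<lambda>T. I \<union> T"])
    fix S assume S: "S \<in> {S\<in>small_subsets E w. I \<subseteq> S}"
    then show "I \<union> (S - I) = S" "g (I \<union> (S - I)) * bweight E s (I \<union> (S - I)) = g S * bweight E s S"
      by (auto simp: Un_absorb1)
    have "finite S" using S fin by (auto simp: small_subsets_def intro: finite_subset)
    then have "card (S - I) = card S - card I" using S finI by (simp add: card_Diff_subset)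
    then show "S - I \<in> small_subsets F k"
      using S by (auto simp: small_subsets_def F_def k_def I_def)
  next
    fix T assume T: "T \<in> small_subsets F k"
    then have "finite T" "I \<inter> T = {}"
      using fin by (auto simp: small_subsets_def F_def I_def intro: finite_subset)
    then have "card (I \<union> T) = card I + card T" using finI by (simp add: card_Un_disjoint)
    then show "I \<union> T - I = T" "I \<union> T \<in> {S\<in>small_subsets E w. I \<subseteq> S}"
      using T unsat by (auto simp: small_subsets_def F_def k_def I_def infset_def)
  qed
  also have "\<dots> = (\<Sum>T\<in>small_subsets F k. g (I \<union> T) * ((\<Prod>f\<in>F. s f) * Yprod Y T))"
    using bweight_inv1p_reduce[OF fin]
    by (intro sum.cong refl) (auto simp: small_subsets_def F_def I_def s_def)
  finally show ?thesis by (simp add: I_def s_def sum_distrib_left algebra_simps)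
qed

lemma Dmap_mean_size:
  fixes Y :: "'a \<Rightarrow> ennreal"
  assumes fin: "finite E" and unsat: "card (infset E Y) \<le> w"
  shows "Zw E w (\<lambda>f. inv1p (Y f)) > 0
    \<and> Dmap E w Y = Nw E w (\<lambda>f. inv1p (Y f)) / Zw E w (\<lambda>f. inv1p (Y f))"
proof -
  define F where "F = E - infset E Y"
  define k where "k = w - card (infset E Y)"
  define c where "c = (\<Prod>f\<in>F. inv1p (Y f))"
  define Z where "Z = (\<Sum>T\<in>small_subsets F k. Yprod Y T)"
  define Q where "Q = (\<Sum>T\<in>small_subsets F k. real (card T) * Yprod Y T)"
  have c: "c > 0" unfolding c_def F_def by (rule prod_pos) (auto simp: infset_def inv1p_pos)
  have Z: "Z \<ge> 1" unfolding Z_def by (rule sum_Yprod_ge_1) (use fin in \<open>simp add: F_def\<close>)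
  have finI: "finite (infset E Y)" using fin by (simp add: infset_def)
  have card_Un: "card (infset E Y \<union> T) = card (infset E Y) + card T"
    if "T \<in> small_subsets F k" for T
    using that fin finI
    by (intro card_Un_disjoint) (auto simp: small_subsets_def F_def intro: finite_subset)
  have Zw: "Zw E w (\<lambda>f. inv1p (Y f)) = c * Z"
    using sum_bweight_inv1p[OF fin unsat, of "\<lambda>_. 1"] by (simp add: Zw_def Z_def c_def F_def k_def)
  have "Nw E w (\<lambda>f. inv1p (Y f))
      = c * (\<Sum>T\<in>small_subsets F k. real (card (infset E Y \<union> T)) * Yprod Y T)"
    using sum_bweight_inv1p[OF fin unsat, of "\<lambda>S. real (card S)"]
    by (simp add: Nw_def c_def F_def k_def)
  also have "\<dots> = c * (real (card (infset E Y)) * Z + Q)"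
    by (simp add: card_Un Z_def Q_def algebra_simps sum.distrib sum_distrib_left)
  finally have Nw: "Nw E w (\<lambda>f. inv1p (Y f)) = c * (real (card (infset E Y)) * Z + Q)" .
  have "Dmap E w Y = Q / Z + real (card (infset E Y))"
    using sum_Dterm[OF fin unsat] unsat by (simp add: Dmap_altdef Q_def Z_def F_def k_def)
  also have "\<dots> = Nw E w (\<lambda>f. inv1p (Y f)) / Zw E w (\<lambda>f. inv1p (Y f))"
    unfolding Nw Zw using c Z by (simp add: field_simps)
  finally show ?thesis using c Z Zw by simp
qed

section \<open>Bounds, finite vectors and continuity of \<open>\<D>\<close>\<close>

lemma Dmap_bounds:
  assumes fin: "finite E"
  shows "0 \<le> Dmap E w Y \<and> Dmap E w Y \<le> real (card E) \<and> Dmap E w Y \<le> real w"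
proof (cases "card (infset E Y) \<le> w")
  case True
  have "\<And>f. 0 \<le> inv1p (Y f) \<and> inv1p (Y f) \<le> 1" by (rule inv1p_range)
  from mean_size_bounds[OF fin this] Dmap_mean_size[OF fin True] show ?thesis by simp
next
  case False
  have "card (infset E Y) \<le> card E" using fin by (intro card_mono) (auto simp: infset_def)
  then show ?thesis using False Dmap_saturated[of w E Y] by simp
qed

lemma Dmap_finite_vector:
  assumes "w \<ge> 1" and finite_coords: "\<forall>e\<in>E. Y e < \<infinity>"
  shows "Dmap E w Y = (\<Sum>e\<in>E. enn2real (Y e) * Rfin E w e Y / (1 + enn2real (Y e) * Rfin E w e Y))"
proof -
  have no_inf: "infset E Y = {}" and "Einf E e Y = {}" for e
    using finite_coords by (auto simp: infset_def Einf_def)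
  then have "Rmap E w e Y = Rfin E w e Y" for e
    using assms(1) by (simp add: Rmap_def Rfin_def)
  then show ?thesis using finite_coords by (simp add: Dmap_altdef no_inf Dterm_def)
qed

lemma tendsto_inv1p_coordinate: "((\<lambda>Y. inv1p (Y f)) \<longlongrightarrow> inv1p (Y0 f)) (at Y0 within D)"
proof -
  have "((\<lambda>Y. Y f) \<longlongrightarrow> Y0 f) (at Y0 within D)"
    using continuous_on_product_coordinates[of f]
    by (auto simp: continuous_on_def intro: tendsto_within_subset)
  then show ?thesis by (rule continuous_on_tendsto_compose[OF continuous_inv1p]) auto
qed

text \<open>Infinite coordinates cannot appear near a point: finite ones stay finite nearby.\<close>
lemma eventually_infset_subset:
  assumes fin: "finite E"
  shows "eventually (\<lambda>Y. infset E Y \<subseteq> infset E Y0) (at Y0 within D)"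
proof -
  have "eventually (\<lambda>Y. Y f < \<infinity>) (at Y0 within D)" if "f \<in> E - infset E Y0" for f
  proof (rule order_tendstoD(2))
    show "((\<lambda>Y. Y f) \<longlongrightarrow> Y0 f) (at Y0 within D)"
      using continuous_on_product_coordinates[of f]
      by (auto simp: continuous_on_def intro: tendsto_within_subset)
    show "Y0 f < \<infinity>" using that by (auto simp: infset_def top.not_eq_extremum)
  qed
  then have "eventually (\<lambda>Y. \<forall>f\<in>E - infset E Y0. Y f < \<infinity>) (at Y0 within D)"
    using fin by (intro eventually_ball_finite) auto
  then show ?thesis
  proof (rule eventually_mono)
    fix Y :: "'a \<Rightarrow> ennreal" assume finite_near: "\<forall>f\<in>E - infset E Y0. Y f < \<infinity>"
    show "infset E Y \<subseteq> infset E Y0"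
    proof
      fix f assume f: "f \<in> infset E Y"
      show "f \<in> infset E Y0"
      proof (rule ccontr)
        assume "f \<notin> infset E Y0"
        then have "f \<in> E - infset E Y0" using f by (simp add: infset_def)
        then have "Y f < \<infinity>" using finite_near by blast
        then show False using f by (simp add: infset_def)
      qed
    qed
  qed
qed

text \<open>At a point with at most \<open>w\<close> infinite coordinates, \<open>\<D> = N/Z\<close> nearby, a quotient of
  continuous functions with nonzero denominator.\<close>
lemma Dmap_tendsto_unsaturated:
  assumes fin: "finite E" and unsat: "card (infset E Y0) \<le> w"
  shows "(Dmap E w \<longlongrightarrow> Dmap E w Y0) (at Y0 within D)"
proof -
  let ?N = "\<lambda>Y. Nw E w (\<lambda>f. inv1p (Y f))" and ?Z = "\<lambda>Y. Zw E w (\<lambda>f. inv1p (Y f))"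
  have "(?N \<longlongrightarrow> ?N Y0) (at Y0 within D)" and "(?Z \<longlongrightarrow> ?Z Y0) (at Y0 within D)"
    unfolding Nw_def Zw_def bweight_def by (intro tendsto_intros tendsto_inv1p_coordinate)+
  from tendsto_divide[OF this] have "((\<lambda>Y. ?N Y / ?Z Y) \<longlongrightarrow> Dmap E w Y0) (at Y0 within D)"
    using Dmap_mean_size[OF fin unsat] by simp
  moreover have "eventually (\<lambda>Y. ?N Y / ?Z Y = Dmap E w Y) (at Y0 within D)"
    using eventually_infset_subset[OF fin]
  proof (rule eventually_mono)
    fix Y assume "infset E Y \<subseteq> infset E Y0"
    then have "card (infset E Y) \<le> card (infset E Y0)"
      by (rule card_mono[rotated]) (use fin in \<open>simp add: infset_def\<close>)
    then have "card (infset E Y) \<le> w" using unsat by simp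
    then show "?N Y / ?Z Y = Dmap E w Y" using Dmap_mean_size[OF fin] by simp
  qed
  ultimately show ?thesis by (rule Lim_transform_eventually)
qed

text \<open>At a point with more than \<open>w\<close> infinite coordinates \<open>U\<close>, the value \<open>w\<close> is squeezed
  between \<open>\<D> \<le> w\<close> and the truncation estimate, whose error \<open>\<Sum>\<^sub>f\<^sub>\<in>\<^sub>U s\<^sub>f\<close> tends to \<open>0\<close>.\<close>
lemma Dmap_tendsto_saturated:
  assumes fin: "finite E" and sat: "card (infset E Y0) > w"
  shows "(Dmap E w \<longlongrightarrow> Dmap E w Y0) (at Y0 within D)"
proof -
  define U where "U = infset E Y0"
  define C where "C = 2 * real w * real (card (small_subsets E w))"
  have "C \<ge> 0" by (simp add: C_def)
  have lower: "real w - C * (\<Sum>f\<in>U. inv1p (Y f)) \<le> Dmap E w Y" for Y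
  proof (cases "card (infset E Y) \<le> w")
    case True
    have "\<And>f. 0 \<le> inv1p (Y f) \<and> inv1p (Y f) \<le> 1" by (rule inv1p_range)
    moreover have "U \<subseteq> E" by (simp add: U_def infset_def)
    ultimately have "real w - Nw E w (\<lambda>f. inv1p (Y f)) / Zw E w (\<lambda>f. inv1p (Y f))
        \<le> C * (\<Sum>f\<in>U. inv1p (Y f))"
      using mean_size_near_max[of E "\<lambda>f. inv1p (Y f)" w U] Dmap_mean_size[OF fin True] fin sat
      by (simp add: C_def U_def)
    then show ?thesis using Dmap_mean_size[OF fin True] by simp
  next
    case False
    have "C * (\<Sum>f\<in>U. inv1p (Y f)) \<ge> 0"
      using \<open>C \<ge> 0\<close> inv1p_range by (simp add: sum_nonneg)
    then show ?thesis using Dmap_saturated[of w E Y] False by simp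
  qed
  have "((\<lambda>Y. real w - C * (\<Sum>f\<in>U. inv1p (Y f)))
      \<longlongrightarrow> real w - C * (\<Sum>f\<in>U. inv1p (Y0 f))) (at Y0 within D)"
    by (intro tendsto_intros tendsto_inv1p_coordinate)
  moreover have "(\<Sum>f\<in>U. inv1p (Y0 f)) = 0" by (simp add: U_def infset_def)
  ultimately have lim: "((\<lambda>Y. real w - C * (\<Sum>f\<in>U. inv1p (Y f))) \<longlongrightarrow> real w) (at Y0 within D)"
    by simp
  have "(Dmap E w \<longlongrightarrow> real w) (at Y0 within D)"
    by (rule tendsto_sandwich[OF _ _ lim tendsto_const])
      (auto intro!: always_eventually lower Dmap_bounds[OF fin, THEN conjunct2, THEN conjunct2])
  then show ?thesis using Dmap_saturated[OF sat] by simp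
qed

lemma continuous_Dmap:
  assumes "finite E"
  shows "continuous_on D (Dmap E w)"
  unfolding continuous_on_def
proof
  fix Y0 show "(Dmap E w \<longlongrightarrow> Dmap E w Y0) (at Y0 within D)"
    by (cases "card (infset E Y0) \<le> w")
      (simp_all add: Dmap_tendsto_unsaturated[OF assms] Dmap_tendsto_saturated[OF assms])
qed

theorem mainTheorem5:
  fixes E :: "'a set" and w :: nat
  assumes "finite E" and "w \<ge> 1"
  shows "(\<forall>Y\<in>E \<rightarrow>\<^sub>E UNIV. 0 \<le> Dmap E w Y \<and> Dmap E w Y \<le> real (card E))
    \<and> continuous_on (E \<rightarrow>\<^sub>E UNIV) (Dmap E w)
    \<and> (\<forall>Y\<in>E \<rightarrow>\<^sub>E UNIV. (\<forall>e\<in>E. Y e < \<infinity>) \<longrightarrow>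
          Dmap E w Y = (\<Sum>e\<in>E. enn2real (Y e) * Rfin E w e Y / (1 + enn2real (Y e) * Rfin E w e Y)))"
  using Dmap_bounds[OF assms(1)] continuous_Dmap[OF assms(1)] Dmap_finite_vector[OF assms(2)]
  by blast

end
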